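(* Let $(X,x)$ be a pointed diffeological space. The map $\alpha:\hat{T}_x(X)\to T'_x(X)$ defined by $\alpha(F)([f]+I_x^2(X))=F([f])$ is an isomorphism of vector spaces.
   Context: A diffeological space is a set $X$ together with, for every open subset $U$ of every $\mathbb{R}^n$, a set of functions $U\to X$ called plots, such that constant maps are plots, the composite of a plot with a smooth map between open subsets of Euclidean spaces is a plot, and a function which is locally a plot is a plot; smooth maps send plots to plots. A subset of $X$ is $D$-open if its preimage under every plot is open. For a diffeological space $B$, $C^\infty(B,\mathbb{R})$ carries the functional diffeology: a map $U\to C^\infty(B,\mathbb{R})$ is a plot iff its adjoint $U\times B\to\mathbb{R}$ is smooth. Let $G_x(X)=\operatorname{colim}_B C^\infty(B,\mathbb{R})$, the colimit taken in the category of diffeological spaces over all $D$-open subsets $B$ of $X$ containing $x$ (with the sub-diffeology), along restriction maps; it is a diffeological $\mathbb{R}$-algebra (germs of smooth functions at $x$) with smooth evaluation map $[f]\mapsto f(x)$. An external tangent vector at $x$ is a smooth linear map $F:G_x(X)\to\mathbb{R}$ satisfying $F([f][g])=F([f])g(x)+f(x)F([g])$; $\hat{T}_x(X)$ is the vector space of these. Let $I_x(X)$ be the kernel of evaluation with the sub-diffeology, $I_x(X)/I_x^2(X)$ the quotient vector space with the quotient diffeology, and $T'_x(X)$ the vector space of smooth linear maps $I_x(X)/I_x^2(X)\to\mathbb{R}$. *)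

theory Defs
  imports "HOL-Analysis.Analysis"
begin

text \<open>A point of R^n is encoded as a function nat => real vanishing at all
  coordinates i >= n.  The topology used for continuity is the product topology
  on nat => real, which restricts on R^n to the usual one.\<close>

definition Rn :: "nat \<Rightarrow> (nat \<Rightarrow> real) set" where
  "Rn n = {y. \<forall>i\<ge>n. y i = 0}"

definition open_Rn :: "nat \<Rightarrow> (nat \<Rightarrow> real) set \<Rightarrow> bool" where
  "open_Rn n U \<longleftrightarrow> U \<subseteq> Rn n \<and>
     (\<forall>y\<in>U. \<exists>e>0. \<forall>z\<in>Rn n. (\<forall>i<n. \<bar>z i - y i\<bar> < e) \<longrightarrow> z \<in> U)"

definition partial :: "nat \<Rightarrow> ((nat \<Rightarrow> real) \<Rightarrow> real) \<Rightarrow> (nat \<Rightarrow> real) \<Rightarrow> real" where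
  "partial i f y = deriv (\<lambda>t. f (y(i := y i + t))) 0"

fun Ck :: "nat \<Rightarrow> (nat \<Rightarrow> real) set \<Rightarrow> nat \<Rightarrow> ((nat \<Rightarrow> real) \<Rightarrow> real) \<Rightarrow> bool" where
  "Ck n U 0 f = continuous_on U f"
| "Ck n U (Suc k) f =
     (continuous_on U f \<and>
      (\<forall>y\<in>U. \<forall>i<n. (\<lambda>t. f (y(i := y i + t))) differentiable (at 0)) \<and>
      (\<forall>i<n. Ck n U k (partial i f)))"

definition smooth_fun :: "nat \<Rightarrow> (nat \<Rightarrow> real) set \<Rightarrow> ((nat \<Rightarrow> real) \<Rightarrow> real) \<Rightarrow> bool" where
  "smooth_fun n U f \<longleftrightarrow> (\<forall>k. Ck n U k f)"

definition smooth_map ::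
  "nat \<Rightarrow> (nat \<Rightarrow> real) set \<Rightarrow> nat \<Rightarrow> (nat \<Rightarrow> real) set \<Rightarrow> ((nat \<Rightarrow> real) \<Rightarrow> (nat \<Rightarrow> real)) \<Rightarrow> bool" where
  "smooth_map m V n U g \<longleftrightarrow> g ` V \<subseteq> U \<and> (\<forall>i<n. smooth_fun m V (\<lambda>v. g v i))"

text \<open>A family of plots: D n U p says that p (restricted to U) is a plot with domain
  the open set U of R^n.\<close>
type_synonym 'a plots = "nat \<Rightarrow> (nat \<Rightarrow> real) set \<Rightarrow> ((nat \<Rightarrow> real) \<Rightarrow> 'a) \<Rightarrow> bool"

definition diffeology :: "'a set \<Rightarrow> 'a plots \<Rightarrow> bool" where
  "diffeology X D \<longleftrightarrow>
     (\<forall>n U p. D n U p \<longrightarrow> open_Rn n U \<and> p ` U \<subseteq> X)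
   \<and> (\<forall>n U y. open_Rn n U \<and> y \<in> X \<longrightarrow> D n U (\<lambda>_. y))
   \<and> (\<forall>n U p m V g. D n U p \<and> open_Rn m V \<and> smooth_map m V n U g \<longrightarrow> D m V (p \<circ> g))
   \<and> (\<forall>n U p. open_Rn n U \<and> p ` U \<subseteq> X \<and>
        (\<forall>u\<in>U. \<exists>V. open_Rn n V \<and> u \<in> V \<and> V \<subseteq> U \<and> D n V p) \<longrightarrow> D n U p)"

definition dsmooth :: "'a set \<Rightarrow> 'a plots \<Rightarrow> 'b set \<Rightarrow> 'b plots \<Rightarrow> ('a \<Rightarrow> 'b) \<Rightarrow> bool" where
  "dsmooth X DX Y DY f \<longleftrightarrow> f ` X \<subseteq> Y \<and> (\<forall>n U p. DX n U p \<longrightarrow> DY n U (f \<circ> p))"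

definition D_open :: "'a set \<Rightarrow> 'a plots \<Rightarrow> 'a set \<Rightarrow> bool" where
  "D_open X D A \<longleftrightarrow> A \<subseteq> X \<and> (\<forall>n U p. D n U p \<longrightarrow> open_Rn n {u\<in>U. p u \<in> A})"

definition sub_plots :: "'a plots \<Rightarrow> 'a set \<Rightarrow> 'a plots" where
  "sub_plots D B n U p \<longleftrightarrow> D n U p \<and> p ` U \<subseteq> B"

definition real_plots :: "real plots" where
  "real_plots n U p \<longleftrightarrow> open_Rn n U \<and> smooth_fun n U p"

definition std_plots :: "nat \<Rightarrow> (nat \<Rightarrow> real) set \<Rightarrow> (nat \<Rightarrow> real) plots" where
  "std_plots n U k W g \<longleftrightarrow> open_Rn k W \<and> smooth_map k W n U g"

definition prod_plots :: "'a plots \<Rightarrow> 'b plots \<Rightarrow> ('a \<times> 'b) plots" where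
  "prod_plots D1 D2 k W p \<longleftrightarrow> D1 k W (fst \<circ> p) \<and> D2 k W (snd \<circ> p)"

definition Cinf :: "'a set \<Rightarrow> 'a plots \<Rightarrow> ('a \<Rightarrow> real) set" where
  "Cinf B DB = {f. dsmooth B DB UNIV real_plots f \<and> (\<forall>y. y \<notin> B \<longrightarrow> f y = 0)}"

definition fun_plots :: "'a set \<Rightarrow> 'a plots \<Rightarrow> ('a \<Rightarrow> real) plots" where
  "fun_plots B DB n U q \<longleftrightarrow> open_Rn n U \<and> q ` U \<subseteq> Cinf B DB \<and>
     dsmooth (U \<times> B) (prod_plots (std_plots n U) DB) UNIV real_plots (\<lambda>(u, b). q u b)"

definition nbhds :: "'a set \<Rightarrow> 'a plots \<Rightarrow> 'a \<Rightarrow> 'a set set" where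
  "nbhds X D x = {B. D_open X D B \<and> x \<in> B}"

definition germ_reps :: "'a set \<Rightarrow> 'a plots \<Rightarrow> 'a \<Rightarrow> ('a set \<times> ('a \<Rightarrow> real)) set" where
  "germ_reps X D x = {(B, f). B \<in> nbhds X D x \<and> f \<in> Cinf B (sub_plots D B)}"

definition germ_rel :: "'a set \<Rightarrow> 'a plots \<Rightarrow> 'a \<Rightarrow> ('a set \<times> ('a \<Rightarrow> real)) \<Rightarrow> ('a set \<times> ('a \<Rightarrow> real)) \<Rightarrow> bool" where
  "germ_rel X D x r s \<longleftrightarrow>
     (\<exists>W\<in>nbhds X D x. W \<subseteq> fst r \<inter> fst s \<and> (\<forall>y\<in>W. snd r y = snd s y))"

type_synonym 'a germ = "('a set \<times> ('a \<Rightarrow> real)) set"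

definition germ :: "'a set \<Rightarrow> 'a plots \<Rightarrow> 'a \<Rightarrow> ('a set \<times> ('a \<Rightarrow> real)) \<Rightarrow> 'a germ" where
  "germ X D x r = {s \<in> germ_reps X D x. germ_rel X D x r s}"

definition Gx :: "'a set \<Rightarrow> 'a plots \<Rightarrow> 'a \<Rightarrow> 'a germ set" where
  "Gx X D x = germ X D x ` germ_reps X D x"

text \<open>colimit diffeology: plots locally lift to a plot of some C^infinity(B,R)\<close>
definition G_plots :: "'a set \<Rightarrow> 'a plots \<Rightarrow> 'a \<Rightarrow> 'a germ plots" where
  "G_plots X D x n U P \<longleftrightarrow> open_Rn n U \<and> P ` U \<subseteq> Gx X D x \<and>
     (\<forall>u\<in>U. \<exists>V B q. open_Rn n V \<and> u \<in> V \<and> V \<subseteq> U \<and> B \<in> nbhds X D x \<and>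
        fun_plots B (sub_plots D B) n V q \<and> (\<forall>v\<in>V. P v = germ X D x (B, q v)))"

definition rep :: "'a germ \<Rightarrow> ('a set \<times> ('a \<Rightarrow> real))" where
  "rep g = (SOME r. r \<in> g)"

definition gadd :: "'a set \<Rightarrow> 'a plots \<Rightarrow> 'a \<Rightarrow> 'a germ \<Rightarrow> 'a germ \<Rightarrow> 'a germ" where
  "gadd X D x g h = germ X D x (fst (rep g) \<inter> fst (rep h),
     \<lambda>y. if y \<in> fst (rep g) \<inter> fst (rep h) then snd (rep g) y + snd (rep h) y else 0)"

definition gmul :: "'a set \<Rightarrow> 'a plots \<Rightarrow> 'a \<Rightarrow> 'a germ \<Rightarrow> 'a germ \<Rightarrow> 'a germ" where
  "gmul X D x g h = germ X D x (fst (rep g) \<inter> fst (rep h),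
     \<lambda>y. if y \<in> fst (rep g) \<inter> fst (rep h) then snd (rep g) y * snd (rep h) y else 0)"

definition gscale :: "'a set \<Rightarrow> 'a plots \<Rightarrow> 'a \<Rightarrow> real \<Rightarrow> 'a germ \<Rightarrow> 'a germ" where
  "gscale X D x c g = germ X D x (fst (rep g),
     \<lambda>y. if y \<in> fst (rep g) then c * snd (rep g) y else 0)"

definition gzero :: "'a set \<Rightarrow> 'a plots \<Rightarrow> 'a \<Rightarrow> 'a germ" where
  "gzero X D x = germ X D x (X, \<lambda>_. 0)"

definition gev :: "'a \<Rightarrow> 'a germ \<Rightarrow> real" where
  "gev x g = snd (rep g) x"

definition ext_tangent :: "'a set \<Rightarrow> 'a plots \<Rightarrow> 'a \<Rightarrow> ('a germ \<Rightarrow> real) set" where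
  "ext_tangent X D x = {F.
     (\<forall>g. g \<notin> Gx X D x \<longrightarrow> F g = 0) \<and>
     dsmooth (Gx X D x) (G_plots X D x) UNIV real_plots F \<and>
     (\<forall>g\<in>Gx X D x. \<forall>h\<in>Gx X D x. F (gadd X D x g h) = F g + F h) \<and>
     (\<forall>c. \<forall>g\<in>Gx X D x. F (gscale X D x c g) = c * F g) \<and>
     (\<forall>g\<in>Gx X D x. \<forall>h\<in>Gx X D x. F (gmul X D x g h) = F g * gev x h + gev x g * F h)}"

definition Ix :: "'a set \<Rightarrow> 'a plots \<Rightarrow> 'a \<Rightarrow> 'a germ set" where
  "Ix X D x = {g \<in> Gx X D x. gev x g = 0}"

definition I_plots :: "'a set \<Rightarrow> 'a plots \<Rightarrow> 'a \<Rightarrow> 'a germ plots" where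
  "I_plots X D x = sub_plots (G_plots X D x) (Ix X D x)"

text \<open>I_x^2: the ideal generated by products, i.e. finite sums of products a*b with a,b in I_x\<close>
inductive_set Ix2 :: "'a set \<Rightarrow> 'a plots \<Rightarrow> 'a \<Rightarrow> 'a germ set"
  for X :: "'a set" and D :: "'a plots" and x :: 'a where
  zero: "gzero X D x \<in> Ix2 X D x"
| step: "s \<in> Ix2 X D x \<Longrightarrow> a \<in> Ix X D x \<Longrightarrow> b \<in> Ix X D x \<Longrightarrow>
          gadd X D x s (gmul X D x a b) \<in> Ix2 X D x"

definition coset :: "'a set \<Rightarrow> 'a plots \<Rightarrow> 'a \<Rightarrow> 'a germ \<Rightarrow> 'a germ set" where
  "coset X D x g = {h \<in> Ix X D x. gadd X D x h (gscale X D x (-1) g) \<in> Ix2 X D x}"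

definition Q :: "'a set \<Rightarrow> 'a plots \<Rightarrow> 'a \<Rightarrow> 'a germ set set" where
  "Q X D x = coset X D x ` Ix X D x"

text \<open>quotient diffeology: plots locally lift to plots of I_x\<close>
definition Q_plots :: "'a set \<Rightarrow> 'a plots \<Rightarrow> 'a \<Rightarrow> 'a germ set plots" where
  "Q_plots X D x n U P \<longleftrightarrow> open_Rn n U \<and> P ` U \<subseteq> Q X D x \<and>
     (\<forall>u\<in>U. \<exists>V p. open_Rn n V \<and> u \<in> V \<and> V \<subseteq> U \<and> I_plots X D x n V p \<and>
        (\<forall>v\<in>V. P v = coset X D x (p v)))"

definition qadd :: "'a set \<Rightarrow> 'a plots \<Rightarrow> 'a \<Rightarrow> 'a germ set \<Rightarrow> 'a germ set \<Rightarrow> 'a germ set" where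
  "qadd X D x c d = coset X D x (gadd X D x (SOME g. g \<in> c) (SOME g. g \<in> d))"

definition qscale :: "'a set \<Rightarrow> 'a plots \<Rightarrow> 'a \<Rightarrow> real \<Rightarrow> 'a germ set \<Rightarrow> 'a germ set" where
  "qscale X D x r c = coset X D x (gscale X D x r (SOME g. g \<in> c))"

definition Tprime :: "'a set \<Rightarrow> 'a plots \<Rightarrow> 'a \<Rightarrow> ('a germ set \<Rightarrow> real) set" where
  "Tprime X D x = {\<phi>.
     (\<forall>c. c \<notin> Q X D x \<longrightarrow> \<phi> c = 0) \<and>
     dsmooth (Q X D x) (Q_plots X D x) UNIV real_plots \<phi> \<and>
     (\<forall>c\<in>Q X D x. \<forall>d\<in>Q X D x. \<phi> (qadd X D x c d) = \<phi> c + \<phi> d) \<and>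
     (\<forall>r. \<forall>c\<in>Q X D x. \<phi> (qscale X D x r c) = r * \<phi> c)}"

definition alpha :: "'a set \<Rightarrow> 'a plots \<Rightarrow> 'a \<Rightarrow> ('a germ \<Rightarrow> real) \<Rightarrow> ('a germ set \<Rightarrow> real)" where
  "alpha X D x F = (\<lambda>c. if c \<in> Q X D x then F (SOME g. g \<in> c) else 0)"

end

theory Submission
  imports Defs
begin

text \<open>By the Leibniz rule an external tangent vector F vanishes on the constant germ 1 and on
  I_x^2, so F is determined by its restriction to I_x and this restriction factors through
  I_x/I_x^2; this gives a well-defined injective linear map alpha. Conversely a smooth linear
  functional phi on I_x/I_x^2 extends to germs by [g] \<mapsto> phi([g - g(x)] + I_x^2): the product
  rule follows from (g - g(x))(h - h(x)) \<in> I_x^2, and smoothness from the fact that subtracting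
  from a plot of germs its values at x yields a plot of I_x.\<close>

section \<open>Smooth functions on open subsets of R^n\<close>

lemma partial_eqI:
  "((\<lambda>t. f (y(i := y i + t))) has_real_derivative d) (at 0) \<Longrightarrow> partial i f y = d"
  unfolding partial_def by (rule DERIV_imp_deriv)

lemma DERIV_partial:
  "(\<lambda>t. f (y(i := y i + t))) differentiable (at 0) \<Longrightarrow>
   ((\<lambda>t. f (y(i := y i + t))) has_real_derivative partial i f y) (at 0)"
  unfolding partial_def by (rule DERIV_deriv_iff_real_differentiable[THEN iffD2])

lemma open_Rn_coordinate_line:
  assumes "open_Rn n U" "y \<in> U" "i < n"
  obtains e where "e > 0" "\<And>t. \<bar>t\<bar> < e \<Longrightarrow> y(i := y i + t) \<in> U"
proof -
  from assms obtain e where e: "e > 0" "\<forall>z\<in>Rn n. (\<forall>j<n. \<bar>z j - y j\<bar> < e) \<longrightarrow> z \<in> U"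
    unfolding open_Rn_def by blast
  have "y \<in> Rn n" using assms unfolding open_Rn_def by auto
  then have "y(i := y i + t) \<in> Rn n" for t using \<open>i < n\<close> by (auto simp: Rn_def)
  with e show ?thesis by (intro that[of e]) auto
qed

lemma DERIV_partial_cong:
  assumes "open_Rn n U" "y \<in> U" "i < n" "\<And>z. z \<in> U \<Longrightarrow> f z = g z"
    and "(\<lambda>t. f (y(i := y i + t))) differentiable (at 0)"
  shows "((\<lambda>t. g (y(i := y i + t))) has_real_derivative partial i f y) (at 0)"
proof -
  obtain e where e: "e > 0" "\<And>t. \<bar>t\<bar> < e \<Longrightarrow> y(i := y i + t) \<in> U"
    using open_Rn_coordinate_line assms(1-3) by blast
  show ?thesis
    by (rule has_field_derivative_transform_within[OF DERIV_partial[OF assms(5)] e(1)])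
      (use e assms(4) in \<open>auto simp: dist_real_def fun_upd_def\<close>)
qed

lemma Ck_cong:
  "open_Rn n U \<Longrightarrow> Ck n U k f \<Longrightarrow> (\<And>z. z \<in> U \<Longrightarrow> f z = g z) \<Longrightarrow> Ck n U k g"
proof (induction k arbitrary: f g)
  case 0
  then show ?case using continuous_on_cong by (metis Ck.simps(1))
next
  case (Suc k)
  have deriv: "((\<lambda>t. g (y(i := y i + t))) has_real_derivative partial i f y) (at 0)"
    if "y \<in> U" "i < n" for y i
    by (rule DERIV_partial_cong[OF Suc.prems(1) that]) (use Suc.prems that in auto)
  have "Ck n U k (partial i g)" if "i < n" for i
  proof (rule Suc.IH[OF Suc.prems(1)])
    show "Ck n U k (partial i f)" using Suc.prems(2) that by simp
    show "partial i f z = partial i g z" if "z \<in> U" for z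
      using deriv[OF that \<open>i < n\<close>] partial_eqI by metis
  qed
  moreover have "continuous_on U g"
    using Suc.prems continuous_on_cong by (metis Ck.simps(2))
  ultimately show ?case using deriv real_differentiable_def by auto
qed

lemma Ck_SucD: "Ck n U (Suc k) f \<Longrightarrow> Ck n U k f"
  by (induction k arbitrary: f) auto

lemma partial_const: "partial i (\<lambda>_. c) = (\<lambda>_. 0)"
  by (intro ext partial_eqI) simp

lemma Ck_const: "Ck n U k (\<lambda>_. c)"
  by (induction k arbitrary: c) (simp_all add: partial_const)

lemma Ck_add: "open_Rn n U \<Longrightarrow> Ck n U k f \<Longrightarrow> Ck n U k g \<Longrightarrow> Ck n U k (\<lambda>z. f z + g z)"
proof (induction k arbitrary: f g)
  case 0
  then show ?case by (simp add: continuous_on_add)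
next
  case (Suc k)
  have deriv: "((\<lambda>t. f (y(i := y i + t)) + g (y(i := y i + t))) has_real_derivative
      partial i f y + partial i g y) (at 0)" if "y \<in> U" "i < n" for y i
    using Suc.prems that by (auto intro!: DERIV_add DERIV_partial)
  have "Ck n U k (partial i (\<lambda>z. f z + g z))" if "i < n" for i
  proof (rule Ck_cong[OF Suc.prems(1)])
    show "Ck n U k (\<lambda>z. partial i f z + partial i g z)"
      using Suc.IH[OF Suc.prems(1)] Suc.prems that by auto
  qed (use deriv that in \<open>auto intro: partial_eqI[symmetric]\<close>)
  then show ?case
    using Suc.prems deriv real_differentiable_def by (auto intro: continuous_on_add)
qed

lemma Ck_mult: "open_Rn n U \<Longrightarrow> Ck n U k f \<Longrightarrow> Ck n U k g \<Longrightarrow> Ck n U k (\<lambda>z. f z * g z)"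
proof (induction k arbitrary: f g)
  case 0
  then show ?case by (simp add: continuous_on_mult)
next
  case (Suc k)
  have deriv: "((\<lambda>t. f (y(i := y i + t)) * g (y(i := y i + t))) has_real_derivative
      partial i f y * g y + partial i g y * f y) (at 0)" if "y \<in> U" "i < n" for y i
    using DERIV_mult[OF DERIV_partial DERIV_partial, of f y i g] Suc.prems that by simp
  have "Ck n U k (partial i (\<lambda>z. f z * g z))" if "i < n" for i
  proof (rule Ck_cong[OF Suc.prems(1)])
    have "Ck n U k f" "Ck n U k g" using Suc.prems Ck_SucD by blast+
    then show "Ck n U k (\<lambda>z. partial i f z * g z + partial i g z * f z)"
      using Suc.IH[OF Suc.prems(1)] Suc.prems that Ck_add[OF Suc.prems(1)] by auto
  qed (use deriv that in \<open>auto intro: partial_eqI[symmetric]\<close>)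
  then show ?case
    using Suc.prems deriv real_differentiable_def by (auto intro: continuous_on_mult)
qed

lemma open_coordinate_box: "open {z :: nat \<Rightarrow> real. \<forall>i<n. \<bar>z i - y i\<bar> < e}"
proof -
  have "{z :: nat \<Rightarrow> real. \<forall>i<n. \<bar>z i - y i\<bar> < e} = (\<Inter>i<n. {z. \<bar>z i - y i\<bar> < e})"
    by auto
  moreover have "open {z :: nat \<Rightarrow> real. \<bar>z i - y i\<bar> < e}" for i
    by (rule open_Collect_less) (auto intro!: continuous_intros)
  ultimately show ?thesis by auto
qed

lemma continuous_on_open_Rn_local:
  assumes "open_Rn n U" "\<forall>y\<in>U. \<exists>V. open_Rn n V \<and> y \<in> V \<and> V \<subseteq> U \<and> continuous_on V f"
  shows "continuous_on U f"
  unfolding continuous_on_eq_continuous_within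
proof
  fix y assume "y \<in> U"
  then obtain V where V: "open_Rn n V" "y \<in> V" "V \<subseteq> U" "continuous_on V f"
    using assms(2) by blast
  obtain e where e: "e > 0" "\<forall>z\<in>Rn n. (\<forall>j<n. \<bar>z j - y j\<bar> < e) \<longrightarrow> z \<in> V"
    using V unfolding open_Rn_def by blast
  have "U \<subseteq> Rn n" using assms(1) unfolding open_Rn_def by auto
  then have "at y within V = at y within U"
    by (intro at_within_nhd[of _ "{z. \<forall>i<n. \<bar>z i - y i\<bar> < e}"])
      (use e V open_coordinate_box open_Rn_def in auto)
  with V(4) show "continuous (at y within U) f"
    using continuous_on_eq_continuous_within V(2) by metis
qed

lemma Ck_local:
  "open_Rn n U \<Longrightarrow> \<forall>y\<in>U. \<exists>V. open_Rn n V \<and> y \<in> V \<and> V \<subseteq> U \<and> Ck n V k f \<Longrightarrow> Ck n U k f"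
proof (induction k arbitrary: f)
  case 0
  then show ?case using continuous_on_open_Rn_local by simp
next
  case (Suc k)
  have "continuous_on U f"
    using continuous_on_open_Rn_local[OF Suc.prems(1)] Suc.prems(2) by (metis Ck.simps(2))
  moreover have "\<forall>y\<in>U. \<forall>i<n. (\<lambda>t. f (y(i := y i + t))) differentiable (at 0)"
    using Suc.prems(2) by (metis Ck.simps(2) subsetD)
  moreover have "\<forall>i<n. Ck n U k (partial i f)"
    using Suc.IH[OF Suc.prems(1)] Suc.prems(2) by (metis Ck.simps(2))
  ultimately show ?case by simp
qed

lemma smooth_fun_cong:
  "open_Rn n U \<Longrightarrow> smooth_fun n U f \<Longrightarrow> (\<And>z. z \<in> U \<Longrightarrow> f z = g z) \<Longrightarrow> smooth_fun n U g"
  unfolding smooth_fun_def using Ck_cong by blast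

lemma smooth_fun_const: "smooth_fun n U (\<lambda>_. c)"
  unfolding smooth_fun_def using Ck_const by blast

lemma smooth_fun_add:
  "open_Rn n U \<Longrightarrow> smooth_fun n U f \<Longrightarrow> smooth_fun n U g \<Longrightarrow> smooth_fun n U (\<lambda>z. f z + g z)"
  unfolding smooth_fun_def using Ck_add by blast

lemma smooth_fun_mult:
  "open_Rn n U \<Longrightarrow> smooth_fun n U f \<Longrightarrow> smooth_fun n U g \<Longrightarrow> smooth_fun n U (\<lambda>z. f z * g z)"
  unfolding smooth_fun_def using Ck_mult by blast

lemma smooth_fun_diff:
  assumes "open_Rn n U" "smooth_fun n U f" "smooth_fun n U g"
  shows "smooth_fun n U (\<lambda>z. f z - g z)"
proof -
  have "smooth_fun n U (\<lambda>z. f z + (-1) * g z)"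
    by (intro smooth_fun_add smooth_fun_mult smooth_fun_const assms)
  then show ?thesis by (rule smooth_fun_cong[OF assms(1)]) simp
qed

lemma smooth_fun_local:
  "open_Rn n U \<Longrightarrow> \<forall>y\<in>U. \<exists>V. open_Rn n V \<and> y \<in> V \<and> V \<subseteq> U \<and> smooth_fun n V f \<Longrightarrow>
   smooth_fun n U f"
  unfolding smooth_fun_def using Ck_local by (metis (no_types, lifting))

lemma real_plots_cong: "real_plots n U f \<Longrightarrow> (\<And>z. z \<in> U \<Longrightarrow> f z = g z) \<Longrightarrow> real_plots n U g"
  unfolding real_plots_def using smooth_fun_cong by blast

lemma real_plots_local:
  "open_Rn n U \<Longrightarrow> \<forall>y\<in>U. \<exists>V. open_Rn n V \<and> y \<in> V \<and> V \<subseteq> U \<and> real_plots n V f \<Longrightarrow>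
   real_plots n U f"
  unfolding real_plots_def using smooth_fun_local by blast

lemma open_Rn_Int:
  assumes "open_Rn n A" "open_Rn n B"
  shows "open_Rn n (A \<inter> B)"
  unfolding open_Rn_def
proof (intro conjI ballI)
  show "A \<inter> B \<subseteq> Rn n" using assms(1) unfolding open_Rn_def by auto
  fix y assume "y \<in> A \<inter> B"
  then obtain e1 e2 where "e1 > 0" "\<forall>z\<in>Rn n. (\<forall>i<n. \<bar>z i - y i\<bar> < e1) \<longrightarrow> z \<in> A"
    and "e2 > 0" "\<forall>z\<in>Rn n. (\<forall>i<n. \<bar>z i - y i\<bar> < e2) \<longrightarrow> z \<in> B"
    using assms unfolding open_Rn_def by blast
  then show "\<exists>e>0. \<forall>z\<in>Rn n. (\<forall>i<n. \<bar>z i - y i\<bar> < e) \<longrightarrow> z \<in> A \<inter> B"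
    by (intro exI[of _ "min e1 e2"]) auto
qed

section \<open>Germs of smooth functions at a point\<close>

locale pointed_diffeology =
  fixes X :: "'a set" and D :: "'a plots" and x :: 'a
  assumes diffeology: "diffeology X D" and point: "x \<in> X"
begin

abbreviation "N \<equiv> nbhds X D x"
abbreviation "R \<equiv> germ_reps X D x"
abbreviation "G \<equiv> Gx X D x"
abbreviation "I \<equiv> Ix X D x"
abbreviation "I2 \<equiv> Ix2 X D x"
abbreviation "add \<equiv> gadd X D x"
abbreviation "mul \<equiv> gmul X D x"
abbreviation "smul \<equiv> gscale X D x"
abbreviation "zero \<equiv> gzero X D x"
abbreviation "cls \<equiv> coset X D x"
abbreviation "E \<equiv> ext_tangent X D x"
abbreviation "T \<equiv> Tprime X D x"

definition one :: "'a germ" where "one = germ X D x (X, \<lambda>y. if y \<in> X then 1 else 0)"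

lemma plot_open_Rn: "D n U p \<Longrightarrow> open_Rn n U"
  using diffeology[unfolded diffeology_def, THEN conjunct1] by blast

lemma plot_image: "D n U p \<Longrightarrow> p ` U \<subseteq> X"
  using diffeology[unfolded diffeology_def, THEN conjunct1] by blast

lemma plot_const: "open_Rn n U \<Longrightarrow> y \<in> X \<Longrightarrow> D n U (\<lambda>_. y)"
  using diffeology[unfolded diffeology_def, THEN conjunct2, THEN conjunct1] by blast

lemma D_open_space: "D_open X D X"
proof -
  have "{u \<in> U. p u \<in> X} = U" if "D n U p" for n U p using plot_image[OF that] by auto
  then show ?thesis unfolding D_open_def using plot_open_Rn by auto
qed

lemma D_open_Int:
  assumes "D_open X D A" "D_open X D B"
  shows "D_open X D (A \<inter> B)"
  unfolding D_open_def
proof (intro conjI allI impI)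
  show "A \<inter> B \<subseteq> X" using assms unfolding D_open_def by auto
  fix n U p assume "D n U p"
  then have "open_Rn n ({u \<in> U. p u \<in> A} \<inter> {u \<in> U. p u \<in> B})"
    using assms unfolding D_open_def by (blast intro: open_Rn_Int)
  moreover have "{u \<in> U. p u \<in> A} \<inter> {u \<in> U. p u \<in> B} = {u \<in> U. p u \<in> A \<inter> B}" by auto
  ultimately show "open_Rn n {u \<in> U. p u \<in> A \<inter> B}" by simp
qed

lemma nbhds_space: "X \<in> N"
  using D_open_space point unfolding nbhds_def by auto

lemma nbhds_Int: "A \<in> N \<Longrightarrow> B \<in> N \<Longrightarrow> A \<inter> B \<in> N"
  using D_open_Int unfolding nbhds_def by auto

lemma nbhds_point: "W \<in> N \<Longrightarrow> x \<in> W"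
  unfolding nbhds_def by auto

text \<open>Two representatives define the same germ iff they agree eventually in this filter.\<close>

definition nbhd_filter :: "'a filter" where
  "nbhd_filter = (INF W\<in>N. principal W)"

lemma eventually_nbhd_filter: "eventually P nbhd_filter \<longleftrightarrow> (\<exists>W\<in>N. \<forall>y\<in>W. P y)"
proof -
  have directed: "\<exists>C\<in>N. principal C \<le> inf (principal A) (principal B)" if "A \<in> N" "B \<in> N" for A B
    using that nbhds_Int by (intro bexI[of _ "A \<inter> B"]) auto
  have "N \<noteq> {}" using nbhds_space by blast
  then show ?thesis unfolding nbhd_filter_def
    by (subst eventually_INF_base[OF _ directed]) (auto simp: eventually_principal)
qed

lemma eventually_nbhd_filter_point: "eventually P nbhd_filter \<Longrightarrow> P x"
  using eventually_nbhd_filter nbhds_point by blast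

lemma eventually_in_nbhd: "W \<in> N \<Longrightarrow> eventually (\<lambda>y. y \<in> W) nbhd_filter"
  using eventually_nbhd_filter by blast

lemma Cinf_sub_plots_iff:
  "f \<in> Cinf B (sub_plots D B) \<longleftrightarrow> (\<forall>y. y \<notin> B \<longrightarrow> f y = 0) \<and>
     (\<forall>n U p. D n U p \<and> p ` U \<subseteq> B \<longrightarrow> real_plots n U (f \<circ> p))"
  by (auto simp: Cinf_def dsmooth_def sub_plots_def)

lemma Cinf_map2:
  assumes op: "\<And>n U a b. open_Rn n U \<Longrightarrow> smooth_fun n U a \<Longrightarrow> smooth_fun n U b \<Longrightarrow>
      smooth_fun n U (\<lambda>u. op (a u) (b u))"
    and f: "f \<in> Cinf B1 (sub_plots D B1)" and g: "g \<in> Cinf B2 (sub_plots D B2)"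
  shows "(\<lambda>y. if y \<in> B1 \<inter> B2 then op (f y) (g y) else 0) \<in> Cinf (B1 \<inter> B2) (sub_plots D (B1 \<inter> B2))"
  unfolding Cinf_sub_plots_iff
proof (intro conjI allI impI)
  fix n U p assume p: "D n U p \<and> p ` U \<subseteq> B1 \<inter> B2"
  then have "real_plots n U (f \<circ> p)" "real_plots n U (g \<circ> p)"
    using f g unfolding Cinf_sub_plots_iff by auto
  then have "real_plots n U (\<lambda>u. op (f (p u)) (g (p u)))"
    unfolding real_plots_def comp_def using op by auto
  then show "real_plots n U ((\<lambda>y. if y \<in> B1 \<inter> B2 then op (f y) (g y) else 0) \<circ> p)"
    by (rule real_plots_cong) (use p in auto)
qed auto

lemma Cinf_map:
  assumes "\<And>n U a. open_Rn n U \<Longrightarrow> smooth_fun n U a \<Longrightarrow> smooth_fun n U (\<lambda>u. op (a u))"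
    and "f \<in> Cinf B (sub_plots D B)"
  shows "(\<lambda>y. if y \<in> B then op (f y) else 0) \<in> Cinf B (sub_plots D B)"
  using Cinf_map2[of "\<lambda>a b. op a" f B f B] assms by simp

lemma Cinf_const: "(\<lambda>y. if y \<in> B then c else 0) \<in> Cinf B (sub_plots D B)"
  unfolding Cinf_sub_plots_iff
proof (intro conjI allI impI)
  fix n U p assume p: "D n U p \<and> p ` U \<subseteq> B"
  then have "real_plots n U (\<lambda>_. c)"
    unfolding real_plots_def using smooth_fun_const plot_open_Rn by auto
  then show "real_plots n U ((\<lambda>y. if y \<in> B then c else 0) \<circ> p)"
    by (rule real_plots_cong) (use p in auto)
qed simp

lemma germ_reps_iff: "r \<in> R \<longleftrightarrow> fst r \<in> N \<and> snd r \<in> Cinf (fst r) (sub_plots D (fst r))"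
  by (cases r) (auto simp: germ_reps_def)

lemma germ_rel_iff_eventually:
  "germ_rel X D x r s \<longleftrightarrow> eventually (\<lambda>y. y \<in> fst r \<and> y \<in> fst s \<and> snd r y = snd s y) nbhd_filter"
  unfolding germ_rel_def eventually_nbhd_filter
proof
  assume "\<exists>W\<in>N. W \<subseteq> fst r \<inter> fst s \<and> (\<forall>y\<in>W. snd r y = snd s y)"
  then show "\<exists>W\<in>N. \<forall>y\<in>W. y \<in> fst r \<and> y \<in> fst s \<and> snd r y = snd s y" by blast
next
  assume "\<exists>W\<in>N. \<forall>y\<in>W. y \<in> fst r \<and> y \<in> fst s \<and> snd r y = snd s y"
  then show "\<exists>W\<in>N. W \<subseteq> fst r \<inter> fst s \<and> (\<forall>y\<in>W. snd r y = snd s y)" by blast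
qed

lemma germ_self: "r \<in> R \<Longrightarrow> r \<in> germ X D x r"
  unfolding germ_def germ_rel_iff_eventually
  using eventually_in_nbhd germ_reps_iff by simp

lemma germ_eq_if_rel:
  assumes "germ_rel X D x r s"
  shows "germ X D x r = germ X D x s"
proof -
  have "germ_rel X D x r t \<longleftrightarrow> germ_rel X D x s t" for t
  proof
    assume "germ_rel X D x r t"
    then show "germ_rel X D x s t"
      using assms unfolding germ_rel_iff_eventually by (rule eventually_elim2) metis
  next
    assume "germ_rel X D x s t"
    then show "germ_rel X D x r t"
      using assms unfolding germ_rel_iff_eventually by (rule eventually_elim2) metis
  qed
  then show ?thesis unfolding germ_def by simp
qed

lemma rep_germ: "r \<in> R \<Longrightarrow> rep (germ X D x r) \<in> R \<and> germ_rel X D x r (rep (germ X D x r))"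
  using someI[of "\<lambda>s. s \<in> germ X D x r", OF germ_self] unfolding rep_def germ_def by auto

lemma germ_in_Gx: "r \<in> R \<Longrightarrow> germ X D x r \<in> G"
  unfolding Gx_def by auto

lemma Gx_rep: "g \<in> G \<Longrightarrow> rep g \<in> R \<and> germ X D x (rep g) = g"
  unfolding Gx_def using rep_germ germ_eq_if_rel by fastforce

lemma eventually_in_rep: "g \<in> G \<Longrightarrow> eventually (\<lambda>y. y \<in> fst (rep g)) nbhd_filter"
  using Gx_rep germ_reps_iff eventually_in_nbhd by blast

text \<open>The germ operations are defined through the choice function rep; the relation
  "g is the germ of f" forgets that choice.\<close>

definition is_germ :: "'a germ \<Rightarrow> ('a \<Rightarrow> real) \<Rightarrow> bool" where
  "is_germ g f \<longleftrightarrow> g \<in> G \<and> eventually (\<lambda>y. snd (rep g) y = f y) nbhd_filter"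

lemma is_germ_imp_Gx: "is_germ g f \<Longrightarrow> g \<in> G"
  unfolding is_germ_def by simp

lemma is_germ_eventually: "is_germ g f \<Longrightarrow> eventually (\<lambda>y. snd (rep g) y = f y) nbhd_filter"
  unfolding is_germ_def by simp

lemma is_germ_germ:
  assumes "r \<in> R"
  shows "is_germ (germ X D x r) (snd r)"
proof -
  have "eventually (\<lambda>y. snd (rep (germ X D x r)) y = snd r y) nbhd_filter"
    using rep_germ[OF assms] unfolding germ_rel_iff_eventually by (auto elim: eventually_mono)
  then show ?thesis unfolding is_germ_def using germ_in_Gx[OF assms] by simp
qed

lemma is_germ_rep: "g \<in> G \<Longrightarrow> is_germ g (snd (rep g))"
  unfolding is_germ_def by simp

lemma is_germ_cong:
  "is_germ g f \<Longrightarrow> eventually (\<lambda>y. f y = k y) nbhd_filter \<Longrightarrow> is_germ g k"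
  unfolding is_germ_def by (auto elim: eventually_elim2)

lemma is_germ_eqI:
  assumes "is_germ g f" "is_germ h k" "eventually (\<lambda>y. f y = k y) nbhd_filter"
  shows "g = h"
proof -
  have "g \<in> G" "h \<in> G" using assms(1,2) is_germ_imp_Gx by auto
  have "germ_rel X D x (rep g) (rep h)"
    unfolding germ_rel_iff_eventually
    using eventually_in_rep[OF \<open>g \<in> G\<close>] eventually_in_rep[OF \<open>h \<in> G\<close>]
      assms(1,2)[THEN is_germ_eventually] assms(3)
    by eventually_elim auto
  then show ?thesis using germ_eq_if_rel Gx_rep assms(1,2) is_germ_imp_Gx by metis
qed

lemma gev_is_germ: "is_germ g f \<Longrightarrow> gev x g = f x"
  unfolding is_germ_def gev_def using eventually_nbhd_filter_point by auto

lemma is_germ_map2: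
  assumes op: "\<And>n U a b. open_Rn n U \<Longrightarrow> smooth_fun n U a \<Longrightarrow> smooth_fun n U b \<Longrightarrow>
      smooth_fun n U (\<lambda>u. op (a u) (b u))"
    and g: "is_germ g f" and h: "is_germ h k"
  shows "is_germ (germ X D x (fst (rep g) \<inter> fst (rep h),
      \<lambda>y. if y \<in> fst (rep g) \<inter> fst (rep h) then op (snd (rep g) y) (snd (rep h) y) else 0))
    (\<lambda>y. op (f y) (k y))"
    (is "is_germ (germ X D x ?r) _")
proof -
  have "g \<in> G" "h \<in> G" using g h is_germ_imp_Gx by auto
  then have "?r \<in> R"
    unfolding germ_reps_iff fst_conv snd_conv using Gx_rep
    by (intro conjI nbhds_Int Cinf_map2[OF op]) (auto simp: germ_reps_iff)
  then have "is_germ (germ X D x ?r) (snd ?r)" by (rule is_germ_germ)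
  moreover have "eventually (\<lambda>y. snd ?r y = op (f y) (k y)) nbhd_filter"
    using eventually_in_rep[OF \<open>g \<in> G\<close>] eventually_in_rep[OF \<open>h \<in> G\<close>]
      g[THEN is_germ_eventually] h[THEN is_germ_eventually]
    by eventually_elim auto
  ultimately show ?thesis by (rule is_germ_cong)
qed

lemma is_germ_add: "is_germ g f \<Longrightarrow> is_germ h k \<Longrightarrow> is_germ (add g h) (\<lambda>y. f y + k y)"
  unfolding gadd_def by (rule is_germ_map2[OF smooth_fun_add])

lemma is_germ_mult: "is_germ g f \<Longrightarrow> is_germ h k \<Longrightarrow> is_germ (mul g h) (\<lambda>y. f y * k y)"
  unfolding gmul_def by (rule is_germ_map2[OF smooth_fun_mult])

lemma is_germ_smul:
  assumes "is_germ g f"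
  shows "is_germ (smul c g) (\<lambda>y. c * f y)"
proof -
  have "is_germ (germ X D x (fst (rep g) \<inter> fst (rep g),
      \<lambda>y. if y \<in> fst (rep g) \<inter> fst (rep g) then c * snd (rep g) y else 0)) (\<lambda>y. c * f y)"
    by (rule is_germ_map2[OF _ assms assms]) (simp add: smooth_fun_mult smooth_fun_const)
  then show ?thesis unfolding gscale_def by simp
qed

lemma is_germ_const:
  "is_germ (germ X D x (X, \<lambda>y. if y \<in> X then c else 0)) (\<lambda>_. c)"
proof -
  have "(X, \<lambda>y. if y \<in> X then c else 0) \<in> R"
    unfolding germ_reps_iff fst_conv snd_conv by (intro conjI nbhds_space Cinf_const)
  then have "is_germ (germ X D x (X, \<lambda>y. if y \<in> X then c else 0)) (\<lambda>y. if y \<in> X then c else 0)"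
    by (rule is_germ_germ[of "(X, _)", simplified])
  moreover have "eventually (\<lambda>y. (if y \<in> X then c else 0) = c) nbhd_filter"
    using eventually_in_nbhd[OF nbhds_space] by (rule eventually_mono) simp
  ultimately show ?thesis by (rule is_germ_cong)
qed

lemma is_germ_zero: "is_germ zero (\<lambda>_. 0)"
  using is_germ_const[of 0] unfolding gzero_def by (simp add: if_distrib cong: if_cong)

lemma is_germ_one: "is_germ one (\<lambda>_. 1)"
  unfolding one_def by (rule is_germ_const)

text \<open>An identity between germ expressions is proved by \<open>rule is_germ_eqI\<close> followed by these
  rules, which leaves a pointwise identity of real functions.\<close>

lemmas is_germ_intros = is_germ_add is_germ_mult is_germ_smul is_germ_zero is_germ_one is_germ_rep

lemma Gx_add: "a \<in> G \<Longrightarrow> b \<in> G \<Longrightarrow> add a b \<in> G"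
  using is_germ_imp_Gx is_germ_add is_germ_rep by blast

lemma Gx_mult: "a \<in> G \<Longrightarrow> b \<in> G \<Longrightarrow> mul a b \<in> G"
  using is_germ_imp_Gx is_germ_mult is_germ_rep by blast

lemma Gx_smul: "a \<in> G \<Longrightarrow> smul c a \<in> G"
  using is_germ_imp_Gx is_germ_smul is_germ_rep by blast

lemma Gx_zero: "zero \<in> G"
  using is_germ_imp_Gx is_germ_zero by blast

lemma Gx_one: "one \<in> G"
  using is_germ_imp_Gx is_germ_one by blast

lemma gev_rep: "gev x g = snd (rep g) x"
  unfolding gev_def ..

lemma gev_add: "a \<in> G \<Longrightarrow> b \<in> G \<Longrightarrow> gev x (add a b) = gev x a + gev x b"
  using gev_is_germ[OF is_germ_add[OF is_germ_rep is_germ_rep]] gev_rep by simp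

lemma gev_mult: "a \<in> G \<Longrightarrow> b \<in> G \<Longrightarrow> gev x (mul a b) = gev x a * gev x b"
  using gev_is_germ[OF is_germ_mult[OF is_germ_rep is_germ_rep]] gev_rep by simp

lemma gev_smul: "a \<in> G \<Longrightarrow> gev x (smul c a) = c * gev x a"
  using gev_is_germ[OF is_germ_smul[OF is_germ_rep]] gev_rep by simp

lemma gev_zero: "gev x zero = 0"
  using gev_is_germ[OF is_germ_zero] by simp

lemma gev_one: "gev x one = 1"
  using gev_is_germ[OF is_germ_one] by simp

section \<open>The ideals I_x and I_x^2 and the quotient I_x/I_x^2\<close>

lemma Ix_iff: "g \<in> I \<longleftrightarrow> g \<in> G \<and> gev x g = 0"
  unfolding Ix_def by simp

lemma Ix_imp_Gx: "a \<in> I \<Longrightarrow> a \<in> G"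
  unfolding Ix_iff by simp

lemma Ix_add: "a \<in> I \<Longrightarrow> b \<in> I \<Longrightarrow> add a b \<in> I"
  unfolding Ix_iff using Gx_add gev_add by simp

lemma Ix_smul: "a \<in> I \<Longrightarrow> smul c a \<in> I"
  unfolding Ix_iff using Gx_smul gev_smul by simp

lemma Ix_mult: "a \<in> I \<Longrightarrow> b \<in> G \<Longrightarrow> mul a b \<in> I"
  unfolding Ix_iff using Gx_mult gev_mult by simp

lemma Ix_zero: "zero \<in> I"
  unfolding Ix_iff using Gx_zero gev_zero by simp

lemma minus_value_in_Ix: "g \<in> G \<Longrightarrow> add g (smul (- gev x g) one) \<in> I"
  unfolding Ix_iff using Gx_add Gx_smul Gx_one gev_add gev_smul gev_one by simp

lemma Ix2_subset_Ix: "s \<in> I2 \<Longrightarrow> s \<in> I"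
  by (induction s rule: Ix2.induct) (auto intro: Ix_zero Ix_add Ix_mult Ix_imp_Gx)

lemma Ix2_add: "t \<in> I2 \<Longrightarrow> s \<in> I2 \<Longrightarrow> add s t \<in> I2"
proof (induction t rule: Ix2.induct)
  case zero
  have "\<And>s. s \<in> G \<Longrightarrow> add s zero = s"
    by (rule is_germ_eqI, (rule is_germ_intros | assumption)+) simp
  then show ?case using zero Ix2_subset_Ix Ix_imp_Gx by simp
next
  case (step t a b)
  have "\<And>s t a b. \<lbrakk>s \<in> G; t \<in> G; a \<in> G; b \<in> G\<rbrakk> \<Longrightarrow>
      add s (add t (mul a b)) = add (add s t) (mul a b)"
    by (rule is_germ_eqI, (rule is_germ_intros | assumption)+) simp
  then show ?case using step Ix2.step Ix2_subset_Ix Ix_imp_Gx by simp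
qed

lemma Ix2_smul: "s \<in> I2 \<Longrightarrow> smul c s \<in> I2"
proof (induction s rule: Ix2.induct)
  case zero
  have "smul c zero = zero"
    by (rule is_germ_eqI, (rule is_germ_intros | assumption)+) simp
  then show ?case using Ix2.zero by simp
next
  case (step s a b)
  have "\<And>s a b. \<lbrakk>s \<in> G; a \<in> G; b \<in> G\<rbrakk> \<Longrightarrow>
      smul c (add s (mul a b)) = add (smul c s) (mul (smul c a) b)"
    by (rule is_germ_eqI, (rule is_germ_intros | assumption)+) (simp add: algebra_simps)
  then show ?case
    using Ix2.step[OF step.IH Ix_smul[OF step.hyps(2)] step.hyps(3)] step Ix2_subset_Ix Ix_imp_Gx
    by simp
qed

lemma Ix2_mult: "a \<in> I \<Longrightarrow> b \<in> I \<Longrightarrow> mul a b \<in> I2"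
proof -
  assume "a \<in> I" "b \<in> I"
  moreover have "\<And>a b. \<lbrakk>a \<in> G; b \<in> G\<rbrakk> \<Longrightarrow> add zero (mul a b) = mul a b"
    by (rule is_germ_eqI, (rule is_germ_intros | assumption)+) simp
  ultimately show ?thesis using Ix2.step[OF Ix2.zero] Ix_imp_Gx by metis
qed

lemma mem_coset_iff: "h \<in> cls a \<longleftrightarrow> h \<in> I \<and> add h (smul (-1) a) \<in> I2"
  unfolding coset_def by simp

lemma mem_coset_self: "a \<in> I \<Longrightarrow> a \<in> cls a"
proof -
  assume "a \<in> I"
  moreover have "\<And>a. a \<in> G \<Longrightarrow> add a (smul (-1) a) = zero"
    by (rule is_germ_eqI, (rule is_germ_intros | assumption)+) simp
  ultimately show ?thesis unfolding mem_coset_iff using Ix_imp_Gx Ix2.zero by simp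
qed

lemma coset_eq:
  assumes "b \<in> cls a" "a \<in> I"
  shows "cls b = cls a"
proof -
  have b: "b \<in> I" and ba: "add b (smul (-1) a) \<in> I2" using assms mem_coset_iff by auto
  have diff_trans: "\<And>h a b. \<lbrakk>h \<in> G; a \<in> G; b \<in> G\<rbrakk> \<Longrightarrow>
      add (add h (smul (-1) b)) (add b (smul (-1) a)) = add h (smul (-1) a)"
    by (rule is_germ_eqI, (rule is_germ_intros | assumption)+) simp
  have diff_diff: "\<And>h a b. \<lbrakk>h \<in> G; a \<in> G; b \<in> G\<rbrakk> \<Longrightarrow>
      add (add h (smul (-1) a)) (smul (-1) (add b (smul (-1) a))) = add h (smul (-1) b)"
    by (rule is_germ_eqI, (rule is_germ_intros | assumption)+) simp
  have "h \<in> cls b \<longleftrightarrow> h \<in> cls a" for h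
  proof
    assume "h \<in> cls b"
    then have "h \<in> I" "add (add h (smul (-1) b)) (add b (smul (-1) a)) \<in> I2"
      using Ix2_add[OF ba] mem_coset_iff by auto
    then show "h \<in> cls a" using diff_trans b assms(2) Ix_imp_Gx mem_coset_iff by simp
  next
    assume "h \<in> cls a"
    then have "h \<in> I" "add (add h (smul (-1) a)) (smul (-1) (add b (smul (-1) a))) \<in> I2"
      using Ix2_add[OF Ix2_smul[OF ba]] mem_coset_iff by auto
    then show "h \<in> cls b" using diff_diff b assms(2) Ix_imp_Gx mem_coset_iff by simp
  qed
  then show ?thesis by blast
qed

lemma some_in_coset: "a \<in> I \<Longrightarrow> (SOME g. g \<in> cls a) \<in> cls a"
  using mem_coset_self by (rule someI)

lemma coset_in_Q: "a \<in> I \<Longrightarrow> cls a \<in> Q X D x"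
  unfolding Q_def by simp

lemma Q_obtain: "c \<in> Q X D x \<Longrightarrow> \<exists>a. a \<in> I \<and> c = cls a"
  unfolding Q_def by auto

lemma qadd_coset:
  assumes "a \<in> I" "b \<in> I"
  shows "qadd X D x (cls a) (cls b) = cls (add a b)"
proof -
  define a' where "a' = (SOME g. g \<in> cls a)"
  define b' where "b' = (SOME g. g \<in> cls b)"
  have a': "a' \<in> I" "add a' (smul (-1) a) \<in> I2"
    using some_in_coset[OF assms(1)] mem_coset_iff unfolding a'_def by auto
  have b': "b' \<in> I" "add b' (smul (-1) b) \<in> I2"
    using some_in_coset[OF assms(2)] mem_coset_iff unfolding b'_def by auto
  have "\<And>a b a' b'. \<lbrakk>a \<in> G; b \<in> G; a' \<in> G; b' \<in> G\<rbrakk> \<Longrightarrow>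
      add (add a' b') (smul (-1) (add a b)) = add (add a' (smul (-1) a)) (add b' (smul (-1) b))"
    by (rule is_germ_eqI, (rule is_germ_intros | assumption)+) simp
  then have "add (add a' b') (smul (-1) (add a b)) \<in> I2"
    using Ix2_add[OF b'(2) a'(2)] a' b' assms Ix_imp_Gx by simp
  then have "cls (add a' b') = cls (add a b)"
    using coset_eq Ix_add a' b' assms mem_coset_iff by simp
  then show ?thesis unfolding qadd_def a'_def b'_def .
qed

lemma qscale_coset:
  assumes "a \<in> I"
  shows "qscale X D x r (cls a) = cls (smul r a)"
proof -
  define a' where "a' = (SOME g. g \<in> cls a)"
  have a': "a' \<in> I" "add a' (smul (-1) a) \<in> I2"
    using some_in_coset[OF assms] mem_coset_iff unfolding a'_def by auto
  have "\<And>a a'. \<lbrakk>a \<in> G; a' \<in> G\<rbrakk> \<Longrightarrow>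
      add (smul r a') (smul (-1) (smul r a)) = smul r (add a' (smul (-1) a))"
    by (rule is_germ_eqI, (rule is_germ_intros | assumption)+) (simp add: algebra_simps)
  then have "add (smul r a') (smul (-1) (smul r a)) \<in> I2"
    using Ix2_smul[OF a'(2)] a' assms Ix_imp_Gx by simp
  then have "cls (smul r a') = cls (smul r a)"
    using coset_eq Ix_smul a' assms mem_coset_iff by simp
  then show ?thesis unfolding qscale_def a'_def .
qed

section \<open>External tangent vectors give functionals on I_x/I_x^2\<close>

lemma ext_tangent_outside: "F \<in> E \<Longrightarrow> g \<notin> G \<Longrightarrow> F g = 0"
  unfolding ext_tangent_def by simp

lemma ext_tangent_smooth: "F \<in> E \<Longrightarrow> dsmooth G (G_plots X D x) UNIV real_plots F"
  unfolding ext_tangent_def by simp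

lemma ext_tangent_add: "F \<in> E \<Longrightarrow> g \<in> G \<Longrightarrow> h \<in> G \<Longrightarrow> F (add g h) = F g + F h"
  unfolding ext_tangent_def by simp

lemma ext_tangent_smul: "F \<in> E \<Longrightarrow> g \<in> G \<Longrightarrow> F (smul c g) = c * F g"
  unfolding ext_tangent_def by simp

lemma ext_tangent_mult:
  "F \<in> E \<Longrightarrow> g \<in> G \<Longrightarrow> h \<in> G \<Longrightarrow> F (mul g h) = F g * gev x h + gev x g * F h"
  unfolding ext_tangent_def by simp

lemma ext_tangent_zero: "F \<in> E \<Longrightarrow> F zero = 0"
  using ext_tangent_add[OF _ Gx_zero Gx_zero, of F]
    is_germ_eqI[OF is_germ_add[OF is_germ_zero is_germ_zero] is_germ_zero]
  by simp

lemma ext_tangent_Ix2: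
  assumes F: "F \<in> E"
  shows "s \<in> I2 \<Longrightarrow> F s = 0"
proof (induction s rule: Ix2.induct)
  case zero
  show ?case using ext_tangent_zero[OF F] .
next
  case (step s a b)
  then have "a \<in> G" "b \<in> G" "gev x a = 0" "gev x b = 0" "s \<in> G"
    using Ix_iff Ix2_subset_Ix by auto
  then show ?case
    using ext_tangent_add[OF F] ext_tangent_mult[OF F] Gx_mult step.IH by simp
qed

lemma ext_tangent_coset:
  assumes F: "F \<in> E" and "h \<in> I" "k \<in> cls h"
  shows "F k = F h"
proof -
  have k: "k \<in> I" "add k (smul (-1) h) \<in> I2" using assms(3) mem_coset_iff by auto
  have "0 = F (add k (smul (-1) h))" using ext_tangent_Ix2[OF F k(2)] by simp
  also have "\<dots> = F k - F h"
    using ext_tangent_add[OF F] ext_tangent_smul[OF F] Gx_smul Ix_imp_Gx k(1) assms(2) by simp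
  finally show ?thesis by simp
qed

lemma ext_tangent_one: "F \<in> E \<Longrightarrow> F one = 0"
  using ext_tangent_mult[OF _ Gx_one Gx_one, of F] gev_one
    is_germ_eqI[OF is_germ_mult[OF is_germ_one is_germ_one] is_germ_one]
  by simp

lemma alpha_coset: "F \<in> E \<Longrightarrow> h \<in> I \<Longrightarrow> alpha X D x F (cls h) = F h"
  unfolding alpha_def using coset_in_Q ext_tangent_coset some_in_coset by simp

lemma ext_tangent_minus_value:
  assumes "F \<in> E" "g \<in> G"
  shows "F (add g (smul (- gev x g) one)) = F g"
  using ext_tangent_add[OF assms Gx_smul[OF Gx_one]] ext_tangent_smul[OF assms(1) Gx_one]
    ext_tangent_one[OF assms(1)]
  by simp

lemma inj_on_alpha: "inj_on (alpha X D x) E"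
proof (rule inj_onI)
  fix F F' assume F: "F \<in> E" and F': "F' \<in> E" and eq: "alpha X D x F = alpha X D x F'"
  show "F = F'"
  proof
    fix g
    show "F g = F' g"
    proof (cases "g \<in> G")
      case True
      let ?h = "add g (smul (- gev x g) one)"
      have "?h \<in> I" using minus_value_in_Ix[OF True] .
      then have "F g = alpha X D x F (cls ?h)" "F' g = alpha X D x F' (cls ?h)"
        using alpha_coset ext_tangent_minus_value[symmetric] F F' True by simp_all
      then show ?thesis using eq by simp
    qed (simp add: ext_tangent_outside[OF F] ext_tangent_outside[OF F'])
  qed
qed

lemma alpha_smooth:
  assumes F: "F \<in> E"
  shows "dsmooth (Q X D x) (Q_plots X D x) UNIV real_plots (alpha X D x F)"
  unfolding dsmooth_def
proof (intro conjI allI impI)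
  fix n U P assume P: "Q_plots X D x n U P"
  have "open_Rn n U" using P unfolding Q_plots_def by simp
  then show "real_plots n U (alpha X D x F \<circ> P)"
  proof (rule real_plots_local, intro ballI)
    fix u assume "u \<in> U"
    then obtain V p where V: "open_Rn n V" "u \<in> V" "V \<subseteq> U" "I_plots X D x n V p"
      and P_eq: "\<forall>v\<in>V. P v = cls (p v)"
      using P unfolding Q_plots_def by meson
    have "G_plots X D x n V p" and pI: "p ` V \<subseteq> I"
      using V(4) unfolding I_plots_def sub_plots_def by auto
    then have "real_plots n V (F \<circ> p)" using ext_tangent_smooth[OF F] unfolding dsmooth_def by simp
    then have "real_plots n V (alpha X D x F \<circ> P)"
      by (rule real_plots_cong) (use P_eq pI alpha_coset[OF F] in auto)
    then show "\<exists>V. open_Rn n V \<and> u \<in> V \<and> V \<subseteq> U \<and> real_plots n V (alpha X D x F \<circ> P)"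
      using V by blast
  qed
qed simp

lemma alpha_in_Tprime:
  assumes F: "F \<in> E"
  shows "alpha X D x F \<in> T"
  unfolding Tprime_def
proof (intro CollectI conjI allI ballI impI)
  fix c d assume "c \<in> Q X D x" "d \<in> Q X D x"
  then obtain a b where "a \<in> I" "c = cls a" "b \<in> I" "d = cls b" using Q_obtain by blast
  then show "alpha X D x F (qadd X D x c d) = alpha X D x F c + alpha X D x F d"
    using qadd_coset alpha_coset[OF F] Ix_add ext_tangent_add[OF F] Ix_imp_Gx by simp
next
  fix r c assume "c \<in> Q X D x"
  then obtain a where "a \<in> I" "c = cls a" using Q_obtain by blast
  then show "alpha X D x F (qscale X D x r c) = r * alpha X D x F c"
    using qscale_coset alpha_coset[OF F] Ix_smul ext_tangent_smul[OF F] Ix_imp_Gx by simp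
qed (rule alpha_smooth[OF F] | simp add: alpha_def)+

section \<open>Functionals on I_x/I_x^2 give external tangent vectors\<close>

lemma Tprime_outside: "\<phi> \<in> T \<Longrightarrow> c \<notin> Q X D x \<Longrightarrow> \<phi> c = 0"
  unfolding Tprime_def by simp

lemma Tprime_smooth: "\<phi> \<in> T \<Longrightarrow> dsmooth (Q X D x) (Q_plots X D x) UNIV real_plots \<phi>"
  unfolding Tprime_def by simp

lemma Tprime_coset_add:
  assumes "\<phi> \<in> T" "a \<in> I" "b \<in> I"
  shows "\<phi> (cls (add a b)) = \<phi> (cls a) + \<phi> (cls b)"
  using assms coset_in_Q qadd_coset[OF assms(2,3), symmetric] unfolding Tprime_def by simp

lemma Tprime_coset_smul:
  assumes "\<phi> \<in> T" "a \<in> I"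
  shows "\<phi> (cls (smul r a)) = r * \<phi> (cls a)"
  using assms coset_in_Q qscale_coset[OF assms(2), symmetric] unfolding Tprime_def by simp

lemma Tprime_coset_Ix2:
  assumes "\<phi> \<in> T" "s \<in> I2"
  shows "\<phi> (cls s) = 0"
proof -
  have "s \<in> I" using Ix2_subset_Ix[OF assms(2)] .
  moreover have "\<And>a. a \<in> G \<Longrightarrow> add a (smul (-1) zero) = a"
    by (rule is_germ_eqI, (rule is_germ_intros | assumption)+) simp
  ultimately have "cls s = cls zero"
    using coset_eq Ix_zero assms(2) Ix_imp_Gx mem_coset_iff by simp
  moreover have "\<phi> (cls zero) = 0"
    using Tprime_coset_smul[OF assms(1) Ix_zero, of 0]
      is_germ_eqI[OF is_germ_smul[OF is_germ_zero] is_germ_zero]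
    by simp
  ultimately show ?thesis by simp
qed

definition tangent_of :: "('a germ set \<Rightarrow> real) \<Rightarrow> 'a germ \<Rightarrow> real" where
  "tangent_of \<phi> g = (if g \<in> G then \<phi> (cls (add g (smul (- gev x g) one))) else 0)"

lemma tangent_of_add:
  assumes \<phi>: "\<phi> \<in> T" and g: "g \<in> G" and h: "h \<in> G"
  shows "tangent_of \<phi> (add g h) = tangent_of \<phi> g + tangent_of \<phi> h"
proof -
  have "\<And>g h e1 e2. \<lbrakk>g \<in> G; h \<in> G\<rbrakk> \<Longrightarrow> add (add g h) (smul (-(e1 + e2)) one) =
      add (add g (smul (-e1) one)) (add h (smul (-e2) one))"
    by (rule is_germ_eqI, (rule is_germ_intros | assumption)+) (simp add: algebra_simps)
  then show ?thesis
    unfolding tangent_of_def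
    using Gx_add gev_add Tprime_coset_add[OF \<phi> minus_value_in_Ix minus_value_in_Ix] g h by simp
qed

lemma tangent_of_smul:
  assumes \<phi>: "\<phi> \<in> T" and g: "g \<in> G"
  shows "tangent_of \<phi> (smul c g) = c * tangent_of \<phi> g"
proof -
  have "\<And>g e. g \<in> G \<Longrightarrow> add (smul c g) (smul (-(c * e)) one) = smul c (add g (smul (-e) one))"
    by (rule is_germ_eqI, (rule is_germ_intros | assumption)+) (simp add: algebra_simps)
  then show ?thesis
    unfolding tangent_of_def
    using Gx_smul gev_smul Tprime_coset_smul[OF \<phi> minus_value_in_Ix] g by simp
qed

text \<open>The product rule comes from
  gh - g(x)h(x) = (g - g(x))(h - h(x)) + h(x)(g - g(x)) + g(x)(h - h(x)),
  whose first summand lies in I_x^2.\<close>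

lemma tangent_of_mult:
  assumes \<phi>: "\<phi> \<in> T" and g: "g \<in> G" and h: "h \<in> G"
  shows "tangent_of \<phi> (mul g h) = tangent_of \<phi> g * gev x h + gev x g * tangent_of \<phi> h"
proof -
  let ?a = "add g (smul (- gev x g) one)" and ?b = "add h (smul (- gev x h) one)"
  have a: "?a \<in> I" and b: "?b \<in> I" using minus_value_in_Ix g h by auto
  have "\<And>g h e1 e2. \<lbrakk>g \<in> G; h \<in> G\<rbrakk> \<Longrightarrow> add (mul g h) (smul (-(e1 * e2)) one) =
      add (mul (add g (smul (-e1) one)) (add h (smul (-e2) one)))
        (add (smul e2 (add g (smul (-e1) one))) (smul e1 (add h (smul (-e2) one))))"
    by (rule is_germ_eqI, (rule is_germ_intros | assumption)+) (simp add: algebra_simps)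
  then have "tangent_of \<phi> (mul g h) = \<phi> (cls (add (mul ?a ?b) (add (smul (gev x h) ?a) (smul (gev x g) ?b))))"
    unfolding tangent_of_def using Gx_mult gev_mult g h by simp
  also have "\<dots> = \<phi> (cls (mul ?a ?b)) + (\<phi> (cls (smul (gev x h) ?a)) + \<phi> (cls (smul (gev x g) ?b)))"
    using Tprime_coset_add[OF \<phi>] Ix_mult Ix_add Ix_smul Ix_imp_Gx a b by simp
  also have "\<dots> = gev x h * \<phi> (cls ?a) + gev x g * \<phi> (cls ?b)"
    using Tprime_coset_Ix2[OF \<phi> Ix2_mult[OF a b]] Tprime_coset_smul[OF \<phi>] a b by simp
  finally show ?thesis unfolding tangent_of_def using g h by simp
qed

lemma alpha_tangent_of:
  assumes \<phi>: "\<phi> \<in> T"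
  shows "alpha X D x (tangent_of \<phi>) = \<phi>"
proof
  fix c
  show "alpha X D x (tangent_of \<phi>) c = \<phi> c"
  proof (cases "c \<in> Q X D x")
    case True
    then obtain a where a: "a \<in> I" "c = cls a" using Q_obtain by blast
    define a' where "a' = (SOME g. g \<in> cls a)"
    have a'_coset: "a' \<in> cls a" using some_in_coset[OF a(1)] unfolding a'_def .
    then have a': "a' \<in> G" "gev x a' = 0" using mem_coset_iff Ix_iff by auto
    have "\<And>a. a \<in> G \<Longrightarrow> add a (smul 0 one) = a"
      by (rule is_germ_eqI, (rule is_germ_intros | assumption)+) simp
    then have "tangent_of \<phi> a' = \<phi> (cls a')" unfolding tangent_of_def using a' by simp
    moreover have "alpha X D x (tangent_of \<phi>) c = tangent_of \<phi> a'"
      unfolding alpha_def a'_def using True a(2) by simp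
    ultimately show ?thesis using coset_eq[OF a'_coset a(1)] a(2) by simp
  qed (simp add: alpha_def Tprime_outside[OF \<phi>])
qed

lemma fun_plots_germ_reps:
  "B \<in> N \<Longrightarrow> fun_plots B (sub_plots D B) n V q \<Longrightarrow> v \<in> V \<Longrightarrow> (B, q v) \<in> R"
  unfolding germ_reps_iff fun_plots_def by auto

lemma G_plots_germ_family:
  assumes "B \<in> N" "fun_plots B (sub_plots D B) n V q"
  shows "G_plots X D x n V (\<lambda>v. germ X D x (B, q v))"
  unfolding G_plots_def
proof (intro conjI ballI)
  show "open_Rn n V" using assms(2) unfolding fun_plots_def by simp
  show "(\<lambda>v. germ X D x (B, q v)) ` V \<subseteq> G"
    using fun_plots_germ_reps[OF assms] germ_in_Gx by auto
  show "\<exists>V' B' q'. open_Rn n V' \<and> v \<in> V' \<and> V' \<subseteq> V \<and> B' \<in> N \<and>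
      fun_plots B' (sub_plots D B') n V' q' \<and> (\<forall>w\<in>V'. germ X D x (B, q w) = germ X D x (B', q' w))"
    if "v \<in> V" for v
    by (intro exI[of _ V] exI[of _ B] exI[of _ q]) (use \<open>open_Rn n V\<close> assms that in simp)
qed

lemma Q_plots_of_I_plots:
  assumes "I_plots X D x n V p"
  shows "Q_plots X D x n V (cls \<circ> p)"
  unfolding Q_plots_def
proof (intro conjI ballI)
  show "open_Rn n V" using assms unfolding I_plots_def sub_plots_def G_plots_def by simp
  show "(cls \<circ> p) ` V \<subseteq> Q X D x"
    using assms coset_in_Q unfolding I_plots_def sub_plots_def by auto
  show "\<exists>V' p'. open_Rn n V' \<and> v \<in> V' \<and> V' \<subseteq> V \<and> I_plots X D x n V' p' \<and>
      (\<forall>w\<in>V'. (cls \<circ> p) w = cls (p' w))" if "v \<in> V" for v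
    by (intro exI[of _ V] exI[of _ p]) (use \<open>open_Rn n V\<close> assms that in simp)
qed

text \<open>Shifting a smooth family of functions by its values at x is again smooth, because
  (u, b) \<mapsto> (u, x) is a plot of the product.\<close>

lemma fun_plots_minus_value:
  assumes B: "B \<in> N" and q: "fun_plots B (sub_plots D B) n V q"
  shows "fun_plots B (sub_plots D B) n V (\<lambda>v b. if b \<in> B then q v b - q v x else 0)"
    (is "fun_plots _ _ _ _ ?q")
proof -
  have qC: "q ` V \<subseteq> Cinf B (sub_plots D B)"
    and qs: "dsmooth (V \<times> B) (prod_plots (std_plots n V) (sub_plots D B)) UNIV real_plots
      (\<lambda>(u, b). q u b)"
    using q unfolding fun_plots_def by auto
  have xB: "x \<in> B" using nbhds_point[OF B] .
  have "?q v \<in> Cinf B (sub_plots D B)" if "v \<in> V" for v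
  proof (rule Cinf_map[where op = "\<lambda>a. a - q v x"])
    show "q v \<in> Cinf B (sub_plots D B)" using qC that by blast
  qed (simp add: smooth_fun_diff smooth_fun_const)
  moreover have "dsmooth (V \<times> B) (prod_plots (std_plots n V) (sub_plots D B)) UNIV real_plots
      (\<lambda>(u, b). ?q u b)"
    unfolding dsmooth_def
  proof (intro conjI allI impI)
    fix k W p assume p: "prod_plots (std_plots n V) (sub_plots D B) k W p"
    then have st: "std_plots n V k W (fst \<circ> p)" and sb: "sub_plots D B k W (snd \<circ> p)"
      unfolding prod_plots_def by auto
    have "open_Rn k W" using st unfolding std_plots_def by simp
    then have "sub_plots D B k W (\<lambda>_. x)"
      unfolding sub_plots_def using plot_const point xB by auto
    then have "prod_plots (std_plots n V) (sub_plots D B) k W (\<lambda>w. (fst (p w), x))"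
      unfolding prod_plots_def using st by (simp add: comp_def)
    then have "real_plots k W ((\<lambda>(u, b). q u b) \<circ> (\<lambda>w. (fst (p w), x)))"
      using qs unfolding dsmooth_def by blast
    then have "real_plots k W (\<lambda>w. q (fst (p w)) x)" by (simp add: comp_def)
    moreover have "real_plots k W (\<lambda>w. q (fst (p w)) (snd (p w)))"
      using qs p unfolding dsmooth_def by (auto simp: comp_def split_beta)
    ultimately have "real_plots k W (\<lambda>w. q (fst (p w)) (snd (p w)) - q (fst (p w)) x)"
      unfolding real_plots_def using smooth_fun_diff by blast
    then show "real_plots k W ((\<lambda>(u, b). ?q u b) \<circ> p)"
      by (rule real_plots_cong) (use sb in \<open>auto simp: sub_plots_def split_beta\<close>)
  qed simp
  ultimately show ?thesis using q unfolding fun_plots_def by auto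
qed

lemma germ_minus_value:
  assumes "(B, f) \<in> R"
  shows "add (germ X D x (B, f)) (smul (- gev x (germ X D x (B, f))) one) =
    germ X D x (B, \<lambda>b. if b \<in> B then f b - f x else 0)"
proof -
  have "(\<lambda>b. if b \<in> B then f b - f x else 0) \<in> Cinf B (sub_plots D B)"
    by (rule Cinf_map[where op = "\<lambda>a. a - f x"])
      (use assms in \<open>simp_all add: germ_reps_iff smooth_fun_diff smooth_fun_const\<close>)
  then have "(B, \<lambda>b. if b \<in> B then f b - f x else 0) \<in> R"
    using assms unfolding germ_reps_iff by simp
  moreover have "eventually (\<lambda>y. f y + - f x * 1 = (if y \<in> B then f y - f x else 0)) nbhd_filter"
    using assms unfolding germ_reps_iff by (intro eventually_mono[OF eventually_in_nbhd[of B]]) auto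
  ultimately show ?thesis
    using is_germ_eqI[OF is_germ_add[OF is_germ_germ[OF assms] is_germ_smul[OF is_germ_one]]
        is_germ_germ] gev_is_germ[OF is_germ_germ[OF assms]]
    by simp
qed

lemma tangent_of_smooth:
  assumes \<phi>: "\<phi> \<in> T"
  shows "dsmooth G (G_plots X D x) UNIV real_plots (tangent_of \<phi>)"
  unfolding dsmooth_def
proof (intro conjI allI impI)
  fix n U P assume P: "G_plots X D x n U P"
  have "open_Rn n U" using P unfolding G_plots_def by simp
  then show "real_plots n U (tangent_of \<phi> \<circ> P)"
  proof (rule real_plots_local, intro ballI)
    fix u assume "u \<in> U"
    then obtain V B q where V: "open_Rn n V" "u \<in> V" "V \<subseteq> U" and B: "B \<in> N"
      and q: "fun_plots B (sub_plots D B) n V q" and P_eq: "\<forall>v\<in>V. P v = germ X D x (B, q v)"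
      using P unfolding G_plots_def by meson
    define p where "p = (\<lambda>v. germ X D x (B, \<lambda>b. if b \<in> B then q v b - q v x else 0))"
    have P_G: "P v \<in> G" if "v \<in> V" for v
      using germ_in_Gx[OF fun_plots_germ_reps[OF B q that]] P_eq that by simp
    have p_eq: "p v = add (P v) (smul (- gev x (P v)) one)" if "v \<in> V" for v
      unfolding p_def using germ_minus_value[OF fun_plots_germ_reps[OF B q that]] P_eq that by simp
    have "G_plots X D x n V p"
      unfolding p_def by (rule G_plots_germ_family[OF B fun_plots_minus_value[OF B q]])
    moreover have "p ` V \<subseteq> I" using minus_value_in_Ix P_G p_eq by auto
    ultimately have "I_plots X D x n V p" unfolding I_plots_def sub_plots_def by simp
    then have "real_plots n V (\<phi> \<circ> (cls \<circ> p))"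
      using Tprime_smooth[OF \<phi>] Q_plots_of_I_plots unfolding dsmooth_def by blast
    then have "real_plots n V (tangent_of \<phi> \<circ> P)"
      by (rule real_plots_cong) (simp add: tangent_of_def p_eq P_G)
    then show "\<exists>V. open_Rn n V \<and> u \<in> V \<and> V \<subseteq> U \<and> real_plots n V (tangent_of \<phi> \<circ> P)"
      using V by blast
  qed
qed simp

lemma tangent_of_in_ext_tangent: "\<phi> \<in> T \<Longrightarrow> tangent_of \<phi> \<in> E"
  unfolding ext_tangent_def
  using tangent_of_smooth tangent_of_add tangent_of_smul tangent_of_mult
  by (simp add: tangent_of_def)

lemma bij_betw_alpha: "bij_betw (alpha X D x) E T"
  unfolding bij_betw_def
proof
  show "alpha X D x ` E = T"
  proof
    show "alpha X D x ` E \<subseteq> T" using alpha_in_Tprime by blast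
    show "T \<subseteq> alpha X D x ` E"
      using alpha_tangent_of tangent_of_in_ext_tangent by (metis image_eqI subsetI)
  qed
qed (rule inj_on_alpha)

end

theorem proposition3p11:
  fixes X :: "'a set" and D :: "'a plots" and x :: 'a
  assumes "diffeology X D" and "x \<in> X"
  shows "bij_betw (alpha X D x) (ext_tangent X D x) (Tprime X D x) \<and>
    (\<forall>F\<in>ext_tangent X D x. \<forall>G\<in>ext_tangent X D x.
       alpha X D x (\<lambda>g. F g + G g) = (\<lambda>c. alpha X D x F c + alpha X D x G c)) \<and>
    (\<forall>F\<in>ext_tangent X D x. \<forall>r::real.
       alpha X D x (\<lambda>g. r * F g) = (\<lambda>c. r * alpha X D x F c))"
proof -
  interpret pointed_diffeology X D x
    using assms by (rule pointed_diffeology.intro)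
  show ?thesis
    using bij_betw_alpha by (simp add: alpha_def fun_eq_iff)
qed

end
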